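(* Let $X$ be a vertex-weighted simplicial complex on $n$ vertices, fix $k$, and let $U^{down}$ be a $\Pi^\pm_k$-projected $(1,\alpha,0)$-unitary encoding of $\Pi^\pm_kP^{down}\Pi^\pm_k$, i.e. $(\Pi^\pm_k\otimes\langle0^\alpha|)U^{down}(\Pi^\pm_k\otimes|0^\alpha\rangle)=\Pi^\pm_kP^{down}\Pi^\pm_k$. Let $V^{down}=((I_n\otimes HZ\otimes I)\otimes I_\alpha)U^{down}$, where $HZ$ (product of Hadamard and Pauli-$Z$) acts on qubit $n+1$. Then $(\Pi_k\otimes\langle0^\alpha|)V^{down}(\Pi_k\otimes|0^\alpha\rangle)=\frac{\Delta^{down}_k}{K^{down}\sqrt2}$.
   Context: Vertices $V=\{1,\dots,n\}$ with weights $w:V\to(0,\infty)$. $X$ is a family of nonempty subsets of $V$ closed under nonempty subsets; $X_k$ = $k$-simplices (size $k+1$), identified with Hamming-weight-$(k+1)$ strings $x_\sigma\in\{0,1\}^n$. Oriented $k$-simplex: ordering $[v_0,\dots,v_k]$ up to even permutations, positive if an even permutation of the increasing order. $X^\pm_k=X^+_k\cup X^-_k$, $\overline\sigma$ opposite orientation, $\sigma_+$ the positive one of $\sigma,\overline\sigma$. $[v_0,\dots,v_k]$ induces on the face missing $v_j$ the orientation $(-1)^j[v_0,..,\widehat{v_j},..,v_k]$ (sign $-$ meaning opposite orientation). For oriented $\sigma,\sigma'$ with distinct underlying simplices, $\sigma\sim_\downarrow\sigma'$ if they share a $(k-1)$-face and induce the same orientation on it; $v_\sigma$ ($v_{\sigma'}$)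 is the vertex of $\sigma$ not in $\sigma'$ (vice versa). $\Delta^{down}_k$ is the matrix indexed by $X^+_k$ with $(\Delta^{down}_k)_{\sigma\sigma}=\sum_{v\in\sigma}w(v)^2$, $(\Delta^{down}_k)_{\sigma\sigma'}=w(v_\sigma)w(v_{\sigma'})$ if $\sigma\sim_\downarrow\sigma'$, $-w(v_\sigma)w(v_{\sigma'})$ if $\sigma\sim_\downarrow\overline{\sigma'}$, $0$ otherwise. $\Theta$ is an absorbing state, $S_k=X^\pm_k\cup\{\Theta\}$; $|\sigma\rangle$ is the $(n+2)$-qubit state $|x_\sigma\rangle|00\rangle$ ($\sigma\in X^+_k$), $|x_\sigma\rangle|10\rangle$ ($\sigma\in X^-_k$), $|0^n\rangle|01\rangle$ ($\Theta$). $\Pi_k$, $\Pi^\pm_k$ project onto $\mathrm{span}\{|\sigma\rangle\}$ over $X^+_k$, $X^\pm_k$; matrices indexed by $X^+_k$ or $S_k$ act on these spans in this basis and as $0$ elsewhere. $U$ is a $\Pi_s$-projected $(a,\alpha,\epsilon)$-unitary encoding of $A$ if $\|A-a(\Pi_s\otimes\langle0^\alpha|)U(\Pi_s\otimes|0^\alpha\rangle)\|\le\epsilon$. For $\sigma\in X^\pm_k$: $\tilde i(\sigma)$ = position of the $i$-th $1$ of $x_\sigma$, $j(\tau)$ = position of the $j$-th $0$ of $x_\tau$; $\sigma^\downarrow(i)=\sigma\setminus\{\tilde i(\sigma)\}$. $K^{down}=\max_{\sigma\in X^\pm_k}\sum_{i\in[k+1],j\in[n-k]}w(\tilde i(\sigma))w(j(\sigma^\downarrow(i)))$;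 $\eta^{down}_\sigma=1-\frac1{K^{down}}\sum_{\sigma'\in X^+_k}|(\Delta^{down}_k)_{\sigma'\sigma_+}|$. $P^{down}$ on $S_k$: for $\sigma,\sigma'\in X^\pm_k$, $P^{down}_{\sigma\sigma}=\sum_{v\in\sigma}w(v)^2/K^{down}$, $P^{down}_{\sigma\sigma'}=w(v_\sigma)w(v_{\sigma'})/K^{down}$ if $\sigma\sim_\downarrow\sigma'$, $P^{down}_{\sigma\Theta}=\eta^{down}_\sigma$, $P^{down}_{\Theta\Theta}=1$, all other entries $0$. *)

theory Defs
  imports Complex_Main
begin

text \<open>An oriented simplex is represented as a pair (sigma, s): s = False is the
positive orientation (an even permutation of the increasing order),
s = True the negative (opposite) one.\<close>

definition simplicial_complex :: "nat \<Rightarrow> nat set set \<Rightarrow> bool" where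
  "simplicial_complex n X \<longleftrightarrow>
     (\<forall>\<sigma>\<in>X. \<sigma> \<noteq> {} \<and> \<sigma> \<subseteq> {1..n}) \<and>
     (\<forall>\<sigma>\<in>X. \<forall>\<tau>. \<tau> \<subseteq> \<sigma> \<and> \<tau> \<noteq> {} \<longrightarrow> \<tau> \<in> X)"

definition ksimplices :: "nat set set \<Rightarrow> nat \<Rightarrow> nat set set" where
  "ksimplices X k = {\<sigma>\<in>X. card \<sigma> = k + 1}"

definition oriented_ksimplices :: "nat set set \<Rightarrow> nat \<Rightarrow> (nat set \<times> bool) set" where
  "oriented_ksimplices X k = ksimplices X k \<times> UNIV"

text \<open>Sign (True = opposite orientation) of the orientation induced by the
positively oriented simplex on the face missing v: v is v_j in the increasing
order with j = #{u in sigma. u < v}, and the induced orientation is (-1)^j.\<close>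
definition face_sign :: "nat set \<Rightarrow> nat \<Rightarrow> bool" where
  "face_sign \<sigma> v = odd (card {u\<in>\<sigma>. u < v})"

text \<open>Orientation (relative to the increasing order of the face) induced by
the oriented simplex (sigma, s) on the face sigma - {v}.\<close>
definition induced_orient :: "nat set \<times> bool \<Rightarrow> nat \<Rightarrow> bool" where
  "induced_orient \<sigma>s v = (snd \<sigma>s \<noteq> face_sign (fst \<sigma>s) v)"

definition vtx :: "nat set \<Rightarrow> nat set \<Rightarrow> nat" where
  "vtx \<sigma> \<sigma>' = (THE v. v \<in> \<sigma> - \<sigma>')"

text \<open>Lower adjacency of oriented k-simplices: distinct underlying simplices
sharing a (k-1)-face (i.e. their intersection has k elements) on which they
induce the same orientation.\<close>
definition down_adj :: "nat \<Rightarrow> nat set \<times> bool \<Rightarrow> nat set \<times> bool \<Rightarrow> bool" where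
  "down_adj k \<sigma>s \<sigma>s' \<longleftrightarrow>
     fst \<sigma>s \<noteq> fst \<sigma>s' \<and> card (fst \<sigma>s \<inter> fst \<sigma>s') = k \<and>
     induced_orient \<sigma>s (vtx (fst \<sigma>s) (fst \<sigma>s')) =
     induced_orient \<sigma>s' (vtx (fst \<sigma>s') (fst \<sigma>s))"

text \<open>Down Laplacian, indexed by positively oriented k-simplices (identified
with their underlying sets).\<close>
definition Delta_down :: "(nat \<Rightarrow> real) \<Rightarrow> nat \<Rightarrow> nat set \<Rightarrow> nat set \<Rightarrow> real" where
  "Delta_down w k \<sigma> \<sigma>' =
     (if \<sigma> = \<sigma>' then (\<Sum>v\<in>\<sigma>. (w v)\<^sup>2)
      else if down_adj k (\<sigma>, False) (\<sigma>', False) then w (vtx \<sigma> \<sigma>') * w (vtx \<sigma>' \<sigma>)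
      else if down_adj k (\<sigma>, False) (\<sigma>', True) then - (w (vtx \<sigma> \<sigma>') * w (vtx \<sigma>' \<sigma>))
      else 0)"

text \<open>Position of the i-th 1 of x_sigma (1-indexed), and of the j-th 0 of x_tau.\<close>
definition ith_one :: "nat set \<Rightarrow> nat \<Rightarrow> nat" where
  "ith_one \<sigma> i = sorted_list_of_set \<sigma> ! (i - 1)"

definition jth_zero :: "nat \<Rightarrow> nat set \<Rightarrow> nat \<Rightarrow> nat" where
  "jth_zero n \<tau> j = sorted_list_of_set ({1..n} - \<tau>) ! (j - 1)"

definition K_down :: "nat \<Rightarrow> (nat \<Rightarrow> real) \<Rightarrow> nat set set \<Rightarrow> nat \<Rightarrow> real" where
  "K_down n w X k = Max ((\<lambda>\<sigma>s. \<Sum>i\<in>{1..k+1}. \<Sum>j\<in>{1..n-k}.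
        w (ith_one (fst \<sigma>s) i) *
        w (jth_zero n (fst \<sigma>s - {ith_one (fst \<sigma>s) i}) j)) ` oriented_ksimplices X k)"

definition eta_down :: "nat \<Rightarrow> (nat \<Rightarrow> real) \<Rightarrow> nat set set \<Rightarrow> nat \<Rightarrow> nat set \<times> bool \<Rightarrow> real" where
  "eta_down n w X k \<sigma>s = 1 - (1 / K_down n w X k) *
      (\<Sum>\<sigma>'\<in>ksimplices X k. \<bar>Delta_down w k \<sigma>' (fst \<sigma>s)\<bar>)"

text \<open>States S_k: Some (oriented simplex) or None (the absorbing state Theta).\<close>
definition S_states :: "nat set set \<Rightarrow> nat \<Rightarrow> (nat set \<times> bool) option set" where
  "S_states X k = insert None (Some ` oriented_ksimplices X k)"

fun P_down :: "nat \<Rightarrow> (nat \<Rightarrow> real) \<Rightarrow> nat set set \<Rightarrow> nat \<Rightarrow>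
    (nat set \<times> bool) option \<Rightarrow> (nat set \<times> bool) option \<Rightarrow> real" where
  "P_down n w X k (Some \<sigma>s) (Some \<sigma>s') =
     (if \<sigma>s = \<sigma>s' then (\<Sum>v\<in>fst \<sigma>s. (w v)\<^sup>2) / K_down n w X k
      else if down_adj k \<sigma>s \<sigma>s'
        then w (vtx (fst \<sigma>s) (fst \<sigma>s')) * w (vtx (fst \<sigma>s') (fst \<sigma>s)) / K_down n w X k
      else 0)"
| "P_down n w X k (Some \<sigma>s) None = eta_down n w X k \<sigma>s"
| "P_down n w X k None None = 1"
| "P_down n w X k None (Some \<sigma>s') = 0"

text \<open>Computational basis states of m qubits are bool lists of length m
(list position i = qubit i+1, True = 1). An operator is given by its matrix
entries M x y = <x|M|y>.\<close>
type_synonym qop = "bool list \<Rightarrow> bool list \<Rightarrow> complex"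

definition bits :: "nat \<Rightarrow> bool list set" where
  "bits m = {xs. length xs = m}"

definition qmult :: "nat \<Rightarrow> qop \<Rightarrow> qop \<Rightarrow> qop" where
  "qmult d A B = (\<lambda>x y. \<Sum>z\<in>bits d. A x z * B z y)"

definition qkron :: "nat \<Rightarrow> qop \<Rightarrow> qop \<Rightarrow> qop" where
  "qkron m A B = (\<lambda>x y. A (take m x) (take m y) * B (drop m x) (drop m y))"

definition qid :: qop where
  "qid = (\<lambda>x y. if x = y then 1 else 0)"

definition bra0 :: "nat \<Rightarrow> qop" where
  "bra0 a = (\<lambda>x y. if x = [] \<and> y = replicate a False then 1 else 0)"

definition ket0 :: "nat \<Rightarrow> qop" where
  "ket0 a = (\<lambda>x y. if x = replicate a False \<and> y = [] then 1 else 0)"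

definition hadamard :: qop where
  "hadamard = (\<lambda>x y. (if x = [True] \<and> y = [True] then -1 else 1) / complex_of_real (sqrt 2))"

definition pauliZ :: qop where
  "pauliZ = (\<lambda>x y. if x = y then (if x = [True] then -1 else 1) else 0)"

definition qunitary :: "nat \<Rightarrow> qop \<Rightarrow> bool" where
  "qunitary m U \<longleftrightarrow>
     (\<forall>x\<in>bits m. \<forall>y\<in>bits m. (\<Sum>z\<in>bits m. cnj (U z x) * U z y) = qid x y) \<and>
     (\<forall>x\<in>bits m. \<forall>y\<in>bits m. (\<Sum>z\<in>bits m. U x z * cnj (U y z)) = qid x y)"

text \<open>Operator with matrix M in the basis {st i | i in I} (zero elsewhere).\<close>
definition embed :: "('i \<Rightarrow> bool list) \<Rightarrow> 'i set \<Rightarrow> ('i \<Rightarrow> 'i \<Rightarrow> complex) \<Rightarrow> qop" where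
  "embed st I M = (\<lambda>a b. \<Sum>i\<in>I. \<Sum>j\<in>I. if a = st i \<and> b = st j then M i j else 0)"

text \<open>|sigma> = |x_sigma>|00> (positive), |x_sigma>|10> (negative),
|Theta> = |0^n>|01>.\<close>
fun state :: "nat \<Rightarrow> (nat set \<times> bool) option \<Rightarrow> bool list" where
  "state n None = replicate n False @ [False, True]"
| "state n (Some (\<sigma>, s)) = map (\<lambda>i. Suc i \<in> \<sigma>) [0..<n] @ [s, False]"

definition Pi_k :: "nat \<Rightarrow> nat set set \<Rightarrow> nat \<Rightarrow> qop" where
  "Pi_k n X k = embed (\<lambda>\<sigma>. state n (Some (\<sigma>, False))) (ksimplices X k) (\<lambda>i j. if i = j then 1 else 0)"

definition Pi_pm_k :: "nat \<Rightarrow> nat set set \<Rightarrow> nat \<Rightarrow> qop" where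
  "Pi_pm_k n X k = embed (\<lambda>\<sigma>s. state n (Some \<sigma>s)) (oriented_ksimplices X k) (\<lambda>i j. if i = j then 1 else 0)"

definition P_down_op :: "nat \<Rightarrow> (nat \<Rightarrow> real) \<Rightarrow> nat set set \<Rightarrow> nat \<Rightarrow> qop" where
  "P_down_op n w X k = embed (state n) (S_states X k) (\<lambda>s t. complex_of_real (P_down n w X k s t))"

definition Delta_down_op :: "nat \<Rightarrow> (nat \<Rightarrow> real) \<Rightarrow> nat set set \<Rightarrow> nat \<Rightarrow> qop" where
  "Delta_down_op n w X k = embed (\<lambda>\<sigma>. state n (Some (\<sigma>, False))) (ksimplices X k)
      (\<lambda>\<sigma> \<sigma>'. complex_of_real (Delta_down w k \<sigma> \<sigma>'))"

definition HZ_gate :: "nat \<Rightarrow> qop" where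
  "HZ_gate n = qkron n qid (qkron 1 (qmult 1 hadamard pauliZ) qid)"

end

theory Submission
  imports Defs
begin

text \<open>Read as an operator on rows, I \<otimes> HZ \<otimes> I sends the bra of the positively oriented
simplex to the difference of the bras of its two orientations, divided by sqrt 2. Hence
the projected entry of V at (sigma, tau) is (P(sigma+, tau+) - P(sigma-, tau+)) / sqrt 2.
Reversing the orientation of sigma flips the orientation it induces on every face, so
sigma- is lower adjacent to tau+ exactly when sigma+ is lower adjacent to tau-; the
difference of the two P entries is therefore the signed entry of the down Laplacian
divided by K.\<close>

definition qproj :: "bool list set \<Rightarrow> qop" where
  "qproj A = (\<lambda>x y. if x = y \<and> x \<in> A then 1 else 0)"

lemma finite_bits: "finite (bits m)"
proof -
  have "bits m = {xs. set xs \<subseteq> UNIV \<and> length xs = m}"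
    by (auto simp: bits_def)
  then show ?thesis
    using finite_lists_length_eq[of "UNIV :: bool set" m] by simp
qed

lemma qmult_delta_left:
  assumes "c \<in> bits d" and "\<And>z. z \<in> bits d \<Longrightarrow> A x z = (if z = c then s else 0)"
  shows "qmult d A B x y = s * B c y"
proof -
  have "qmult d A B x y = (\<Sum>z\<in>bits d. if z = c then s * B c y else 0)"
    unfolding qmult_def using assms(2) by (intro sum.cong) auto
  then show ?thesis
    using assms(1) finite_bits by simp
qed

lemma qmult_delta_right:
  assumes "c \<in> bits d" and "\<And>z. z \<in> bits d \<Longrightarrow> B z y = (if z = c then s else 0)"
  shows "qmult d A B x y = A x c * s"
proof -
  have "qmult d A B x y = (\<Sum>z\<in>bits d. if z = c then A x c * s else 0)"
    unfolding qmult_def using assms(2) by (intro sum.cong) auto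
  then show ?thesis
    using assms(1) finite_bits by simp
qed

lemma qmult_two_point_left:
  assumes "c\<^sub>1 \<in> bits d" "c\<^sub>2 \<in> bits d" "c\<^sub>1 \<noteq> c\<^sub>2"
    and "\<And>z. z \<in> bits d \<Longrightarrow> A x z = (if z = c\<^sub>1 then s\<^sub>1 else if z = c\<^sub>2 then s\<^sub>2 else 0)"
  shows "qmult d A B x y = s\<^sub>1 * B c\<^sub>1 y + s\<^sub>2 * B c\<^sub>2 y"
proof -
  have "qmult d A B x y =
      (\<Sum>z\<in>bits d. (if z = c\<^sub>1 then s\<^sub>1 * B c\<^sub>1 y else 0) + (if z = c\<^sub>2 then s\<^sub>2 * B c\<^sub>2 y else 0))"
    unfolding qmult_def using assms(3,4) by (intro sum.cong) auto
  then show ?thesis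
    using assms(1,2) finite_bits by (simp add: sum.distrib)
qed

lemma qproj_sandwich:
  assumes "a \<in> bits m" "b \<in> bits m"
  shows "qmult m (qmult m (qproj A) Q) (qproj A) a b = (if a \<in> A \<and> b \<in> A then Q a b else 0)"
proof -
  have "qmult m (qmult m (qproj A) Q) (qproj A) a b = qmult m (qproj A) Q a b * (if b \<in> A then 1 else 0)"
    by (rule qmult_delta_right[OF assms(2)]) (auto simp: qproj_def)
  also have "qmult m (qproj A) Q a b = (if a \<in> A then 1 else 0) * Q a b"
    by (rule qmult_delta_left[OF assms(1)]) (auto simp: qproj_def)
  finally show ?thesis
    by simp
qed

lemma qkron_qproj_bra0:
  assumes "length a = m"
  shows "qkron m (qproj A) (bra0 \<alpha>) a z =
    (if z = a @ replicate \<alpha> False then (if a \<in> A then 1 else 0) else 0)"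
  using assms
  by (auto simp: qkron_def qproj_def bra0_def append_eq_conv_conj) (metis append_take_drop_id)

lemma qkron_qproj_ket0:
  assumes "length b = m"
  shows "qkron m (qproj A) (ket0 \<alpha>) z b =
    (if z = b @ replicate \<alpha> False then (if b \<in> A then 1 else 0) else 0)"
  using assms
  by (auto simp: qkron_def qproj_def ket0_def append_eq_conv_conj) (metis append_take_drop_id)

lemma qproj_ancilla_sandwich:
  assumes a: "a \<in> bits m" and b: "b \<in> bits m"
  shows "qmult (m + \<alpha>) (qmult (m + \<alpha>) (qkron m (qproj A) (bra0 \<alpha>)) M) (qkron m (qproj A) (ket0 \<alpha>)) a b
    = (if a \<in> A \<and> b \<in> A then M (a @ replicate \<alpha> False) (b @ replicate \<alpha> False) else 0)"
proof -
  let ?pad = "\<lambda>x. x @ replicate \<alpha> False"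
  have pad_in_bits: "?pad x \<in> bits (m + \<alpha>)" if "x \<in> bits m" for x
    using that by (simp add: bits_def)
  have "qmult (m + \<alpha>) (qmult (m + \<alpha>) (qkron m (qproj A) (bra0 \<alpha>)) M) (qkron m (qproj A) (ket0 \<alpha>)) a b
      = qmult (m + \<alpha>) (qkron m (qproj A) (bra0 \<alpha>)) M a (?pad b) * (if b \<in> A then 1 else 0)"
    using b by (intro qmult_delta_right pad_in_bits) (simp_all add: qkron_qproj_ket0 bits_def)
  also have "qmult (m + \<alpha>) (qkron m (qproj A) (bra0 \<alpha>)) M a (?pad b)
      = (if a \<in> A then 1 else 0) * M (?pad a) (?pad b)"
    using a by (intro qmult_delta_left pad_in_bits) (simp_all add: qkron_qproj_bra0 bits_def)
  finally show ?thesis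
    by simp
qed

lemma embed_apply:
  assumes "finite I" "inj_on st I" "i \<in> I" "j \<in> I"
  shows "embed st I M (st i) (st j) = M i j"
proof -
  have "embed st I M (st i) (st j) = (\<Sum>i'\<in>I. if i = i' then \<Sum>j'\<in>I. if j = j' then M i' j' else 0 else 0)"
    unfolding embed_def using assms(2-4) by (intro sum.cong refl) (simp add: inj_on_eq_iff)
  also have "\<dots> = M i j"
    using assms(1,3,4) by simp
  finally show ?thesis .
qed

lemma embed_eq_0:
  assumes "a \<notin> st ` I \<or> b \<notin> st ` I"
  shows "embed st I M a b = 0"
  unfolding embed_def using assms by (intro sum.neutral ballI) auto

lemma embed_id_eq_qproj:
  assumes "finite I" "inj_on st I"
  shows "embed st I (\<lambda>i j. if i = j then 1 else 0) = qproj (st ` I)"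
proof (intro ext)
  fix a b
  show "embed st I (\<lambda>i j. if i = j then 1 else 0) a b = qproj (st ` I) a b"
  proof (cases "a \<in> st ` I \<and> b \<in> st ` I")
    case True
    then obtain i j where ij: "i \<in> I" "j \<in> I" and ab: "a = st i" "b = st j"
      by auto
    then show ?thesis
      using embed_apply[OF assms ij] assms(2) by (simp add: qproj_def inj_on_eq_iff)
  qed (auto simp: embed_eq_0 qproj_def)
qed

lemma bits_one: "bits 1 = {[False], [True]}"
  by (auto simp: bits_def length_Suc_conv)

lemma HZ_entry: "qmult 1 hadamard pauliZ [False] [u] = (if u then -1 else 1) / complex_of_real (sqrt 2)"
  unfolding qmult_def bits_one by (cases u) (auto simp: hadamard_def pauliZ_def)

lemma HZ_gate_apply:
  assumes "length p = n" "length q = n"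
  shows "HZ_gate n (p @ [False, False]) (q @ [u, v]) =
    (if q = p \<and> \<not> v then (if u then -1 else 1) / complex_of_real (sqrt 2) else 0)"
  using assms HZ_entry[of u] by (simp add: HZ_gate_def qkron_def qid_def)

lemma HZ_gate_kron_apply:
  assumes "length p = n" "length q = n"
  shows "qkron (n + 2) (HZ_gate n) qid ((p @ [False, False]) @ r) ((q @ [u, v]) @ r') =
    (if q = p \<and> \<not> v \<and> r' = r then (if u then -1 else 1) / complex_of_real (sqrt 2) else 0)"
proof -
  have "take (n + 2) ((p @ [False, False]) @ r) = p @ [False, False]"
    "drop (n + 2) ((p @ [False, False]) @ r) = r"
    "take (n + 2) ((q @ [u, v]) @ r') = q @ [u, v]"
    "drop (n + 2) ((q @ [u, v]) @ r') = r'"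
    using assms by simp_all
  then show ?thesis
    unfolding qkron_def using HZ_gate_apply[OF assms] by (simp add: qid_def)
qed

lemma bits_decompose:
  assumes "z \<in> bits (n + 2 + \<alpha>)"
  obtains q u v r where "z = (q @ [u, v]) @ r" "length q = n" "length r = \<alpha>"
proof
  have "length z = n + 2 + \<alpha>"
    using assms by (simp add: bits_def)
  then have "drop n z = [z ! n, z ! Suc n] @ drop (n + 2) z"
    by (simp add: Cons_nth_drop_Suc)
  then show "z = (take n z @ [z ! n, z ! Suc n]) @ drop (n + 2) z"
    by (metis append_assoc append_take_drop_id)
qed (use assms in \<open>simp_all add: bits_def\<close>)

lemma HZ_gate_kron_row:
  assumes p: "length p = n" and z: "z \<in> bits (n + 2 + \<alpha>)"
  shows "qkron (n + 2) (HZ_gate n) qid ((p @ [False, False]) @ r) z =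
    (if z = (p @ [False, False]) @ r then 1 / complex_of_real (sqrt 2)
     else if z = (p @ [True, False]) @ r then -1 / complex_of_real (sqrt 2) else 0)"
proof -
  obtain q u v r' where z_eq: "z = (q @ [u, v]) @ r'" and q: "length q = n"
    using bits_decompose[OF z] .
  show ?thesis
    unfolding z_eq HZ_gate_kron_apply[OF p q] using p q by (auto simp: append_eq_append_conv)
qed

lemma HZ_gate_kron_mult_row:
  assumes p: "length p = n" and r: "length r = \<alpha>"
  shows "qmult (n + 2 + \<alpha>) (qkron (n + 2) (HZ_gate n) qid) M ((p @ [False, False]) @ r) y
    = (M ((p @ [False, False]) @ r) y - M ((p @ [True, False]) @ r) y) / complex_of_real (sqrt 2)"
proof -
  have "qmult (n + 2 + \<alpha>) (qkron (n + 2) (HZ_gate n) qid) M ((p @ [False, False]) @ r) y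
      = 1 / complex_of_real (sqrt 2) * M ((p @ [False, False]) @ r) y
        + -1 / complex_of_real (sqrt 2) * M ((p @ [True, False]) @ r) y"
    by (rule qmult_two_point_left[where A = "qkron (n + 2) (HZ_gate n) qid"
          and x = "(p @ [False, False]) @ r", OF _ _ _ HZ_gate_kron_row[OF p]])
      (use p r in \<open>simp_all add: bits_def\<close>)
  then show ?thesis
    by (simp add: diff_divide_distrib)
qed

lemma P_down_diff_eq_Delta_down:
  "P_down n w X k (Some (\<sigma>, False)) (Some (\<tau>, False)) - P_down n w X k (Some (\<sigma>, True)) (Some (\<tau>, False))
   = Delta_down w k \<sigma> \<tau> / K_down n w X k"
  by (cases "\<sigma> = \<tau>")
    (auto simp: Delta_down_def down_adj_def induced_orient_def diff_divide_distrib)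

lemma state_in_bits: "state n s \<in> bits (n + 2)"
  by (cases s) (auto simp: bits_def)

lemma inj_on_indicator_list: "inj_on (\<lambda>\<sigma>. map (\<lambda>i. Suc i \<in> \<sigma>) [0..<n]) (Pow {1..n})"
proof (rule inj_onI)
  fix \<sigma> \<tau> assume "\<sigma> \<in> Pow {1..n}" "\<tau> \<in> Pow {1..n}"
    and eq: "map (\<lambda>i. Suc i \<in> \<sigma>) [0..<n] = map (\<lambda>i. Suc i \<in> \<tau>) [0..<n]"
  have same: "Suc i \<in> \<sigma> \<longleftrightarrow> Suc i \<in> \<tau>" if "i < n" for i
    using arg_cong[OF eq, of "\<lambda>xs. xs ! i"] that by simp
  with \<open>\<sigma> \<in> Pow {1..n}\<close> \<open>\<tau> \<in> Pow {1..n}\<close> have "x \<in> \<sigma> \<longleftrightarrow> x \<in> \<tau>" for x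
  proof (cases x)
    case (Suc i)
    then show ?thesis
      using \<open>\<sigma> \<in> Pow {1..n}\<close> \<open>\<tau> \<in> Pow {1..n}\<close> same[of i] by (cases "i < n") auto
  qed auto
  then show "\<sigma> = \<tau>"
    by blast
qed

lemma inj_on_state: "inj_on (state n) (insert None (Some ` (Pow {1..n} \<times> UNIV)))"
  using inj_on_indicator_list[of n] by (auto simp: inj_on_def)

context
  fixes n X
  assumes X: "simplicial_complex n X"
begin

lemma ksimplices_subset_Pow: "ksimplices X k \<subseteq> Pow {1..n}"
  using X by (auto simp: simplicial_complex_def ksimplices_def)

lemma finite_ksimplices: "finite (ksimplices X k)"
  using ksimplices_subset_Pow finite_subset by blast

lemma finite_oriented_ksimplices: "finite (oriented_ksimplices X k)"
  using finite_ksimplices by (simp add: oriented_ksimplices_def)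

lemma inj_on_state_S_states: "inj_on (state n) (S_states X k)"
  by (rule inj_on_subset[OF inj_on_state])
    (use ksimplices_subset_Pow[of k] in \<open>unfold S_states_def oriented_ksimplices_def, blast\<close>)

lemma inj_on_state_oriented: "inj_on (\<lambda>\<sigma>s. state n (Some \<sigma>s)) (oriented_ksimplices X k)"
  using inj_on_state_S_states[of k] by (auto simp: inj_on_def S_states_def)

lemma inj_on_state_positive: "inj_on (\<lambda>\<sigma>. state n (Some (\<sigma>, False))) (ksimplices X k)"
  using inj_on_state_oriented[of k] by (auto simp: inj_on_def oriented_ksimplices_def)

lemma Pi_k_eq_qproj: "Pi_k n X k = qproj ((\<lambda>\<sigma>. state n (Some (\<sigma>, False))) ` ksimplices X k)"
  unfolding Pi_k_def by (rule embed_id_eq_qproj[OF finite_ksimplices inj_on_state_positive])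

lemma Pi_pm_k_eq_qproj: "Pi_pm_k n X k = qproj ((\<lambda>\<sigma>s. state n (Some \<sigma>s)) ` oriented_ksimplices X k)"
  unfolding Pi_pm_k_def by (rule embed_id_eq_qproj[OF finite_oriented_ksimplices inj_on_state_oriented])

lemma P_down_op_apply:
  assumes "\<sigma>s \<in> oriented_ksimplices X k" "\<tau>s \<in> oriented_ksimplices X k"
  shows "P_down_op n w X k (state n (Some \<sigma>s)) (state n (Some \<tau>s)) = P_down n w X k (Some \<sigma>s) (Some \<tau>s)"
  unfolding P_down_op_def using assms
  by (subst embed_apply[OF _ inj_on_state_S_states])
    (auto simp: S_states_def finite_oriented_ksimplices)

lemma Delta_down_op_apply:
  assumes "\<sigma> \<in> ksimplices X k" "\<tau> \<in> ksimplices X k"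
  shows "Delta_down_op n w X k (state n (Some (\<sigma>, False))) (state n (Some (\<tau>, False)))
    = Delta_down w k \<sigma> \<tau>"
  unfolding Delta_down_op_def using embed_apply[OF finite_ksimplices inj_on_state_positive assms]
  by simp

lemma block_encoding_entry:
  assumes U_enc: "\<forall>a\<in>bits (n + 2). \<forall>b\<in>bits (n + 2).
      qmult (n + 2 + \<alpha>) (qmult (n + 2 + \<alpha>) (qkron (n + 2) (Pi_pm_k n X k) (bra0 \<alpha>)) U)
            (qkron (n + 2) (Pi_pm_k n X k) (ket0 \<alpha>)) a b
      = qmult (n + 2) (qmult (n + 2) (Pi_pm_k n X k) (P_down_op n w X k)) (Pi_pm_k n X k) a b"
    and "\<sigma>s \<in> oriented_ksimplices X k" "\<tau>s \<in> oriented_ksimplices X k"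
  shows "U (state n (Some \<sigma>s) @ replicate \<alpha> False) (state n (Some \<tau>s) @ replicate \<alpha> False)
    = P_down n w X k (Some \<sigma>s) (Some \<tau>s)"
  using U_enc[rule_format, OF state_in_bits state_in_bits, of "Some \<sigma>s" "Some \<tau>s"] assms(2,3)
  unfolding Pi_pm_k_eq_qproj qproj_ancilla_sandwich[OF state_in_bits state_in_bits]
    qproj_sandwich[OF state_in_bits state_in_bits]
  by (simp add: P_down_op_apply del: P_down.simps)

lemma HZ_block_encoding_entry:
  assumes U_enc: "\<forall>a\<in>bits (n + 2). \<forall>b\<in>bits (n + 2).
      qmult (n + 2 + \<alpha>) (qmult (n + 2 + \<alpha>) (qkron (n + 2) (Pi_pm_k n X k) (bra0 \<alpha>)) U)
            (qkron (n + 2) (Pi_pm_k n X k) (ket0 \<alpha>)) a b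
      = qmult (n + 2) (qmult (n + 2) (Pi_pm_k n X k) (P_down_op n w X k)) (Pi_pm_k n X k) a b"
    and \<sigma>: "\<sigma> \<in> ksimplices X k" and \<tau>: "\<tau> \<in> ksimplices X k"
  shows "qmult (n + 2 + \<alpha>) (qkron (n + 2) (HZ_gate n) qid) U
      (state n (Some (\<sigma>, False)) @ replicate \<alpha> False) (state n (Some (\<tau>, False)) @ replicate \<alpha> False)
    = Delta_down w k \<sigma> \<tau> / complex_of_real (K_down n w X k * sqrt 2)"
proof -
  let ?pad = "\<lambda>\<sigma>s. state n (Some \<sigma>s) @ replicate \<alpha> False"
  have oriented: "(\<sigma>, False) \<in> oriented_ksimplices X k" "(\<sigma>, True) \<in> oriented_ksimplices X k"
    "(\<tau>, False) \<in> oriented_ksimplices X k"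
    using \<sigma> \<tau> by (simp_all add: oriented_ksimplices_def)
  have "qmult (n + 2 + \<alpha>) (qkron (n + 2) (HZ_gate n) qid) U (?pad (\<sigma>, False)) (?pad (\<tau>, False))
      = (U (?pad (\<sigma>, False)) (?pad (\<tau>, False)) - U (?pad (\<sigma>, True)) (?pad (\<tau>, False)))
        / complex_of_real (sqrt 2)"
    using HZ_gate_kron_mult_row[of "map (\<lambda>i. Suc i \<in> \<sigma>) [0..<n]" n "replicate \<alpha> False" \<alpha> U]
    by simp
  also have "\<dots> = of_real (P_down n w X k (Some (\<sigma>, False)) (Some (\<tau>, False))
      - P_down n w X k (Some (\<sigma>, True)) (Some (\<tau>, False))) / complex_of_real (sqrt 2)"
    unfolding block_encoding_entry[OF U_enc oriented(1,3)] block_encoding_entry[OF U_enc oriented(2,3)]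
    by (simp only: of_real_diff)
  also have "\<dots> = Delta_down w k \<sigma> \<tau> / complex_of_real (K_down n w X k * sqrt 2)"
    unfolding P_down_diff_eq_Delta_down by simp
  finally show ?thesis .
qed

end

theorem proposition3p7:
  fixes n k \<alpha> :: nat and w :: "nat \<Rightarrow> real" and X :: "nat set set" and U :: qop
  assumes X: "simplicial_complex n X"
    and w_pos: "\<forall>v\<in>{1..n}. w v > 0"
    and U_unitary: "qunitary (n + 2 + \<alpha>) U"
    and U_enc: "\<forall>a\<in>bits (n + 2). \<forall>b\<in>bits (n + 2).
      qmult (n + 2 + \<alpha>) (qmult (n + 2 + \<alpha>) (qkron (n + 2) (Pi_pm_k n X k) (bra0 \<alpha>)) U)
            (qkron (n + 2) (Pi_pm_k n X k) (ket0 \<alpha>)) a b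
      = qmult (n + 2) (qmult (n + 2) (Pi_pm_k n X k) (P_down_op n w X k)) (Pi_pm_k n X k) a b"
  shows "\<forall>a\<in>bits (n + 2). \<forall>b\<in>bits (n + 2).
      qmult (n + 2 + \<alpha>)
        (qmult (n + 2 + \<alpha>) (qkron (n + 2) (Pi_k n X k) (bra0 \<alpha>))
           (qmult (n + 2 + \<alpha>) (qkron (n + 2) (HZ_gate n) qid) U))
        (qkron (n + 2) (Pi_k n X k) (ket0 \<alpha>)) a b
      = Delta_down_op n w X k a b / complex_of_real (K_down n w X k * sqrt 2)"
proof (intro ballI)
  fix a b assume a: "a \<in> bits (n + 2)" and b: "b \<in> bits (n + 2)"
  let ?HZU = "qmult (n + 2 + \<alpha>) (qkron (n + 2) (HZ_gate n) qid) U"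
  let ?Xk = "(\<lambda>\<sigma>. state n (Some (\<sigma>, False))) ` ksimplices X k"
  have "qmult (n + 2 + \<alpha>) (qmult (n + 2 + \<alpha>) (qkron (n + 2) (Pi_k n X k) (bra0 \<alpha>)) ?HZU)
        (qkron (n + 2) (Pi_k n X k) (ket0 \<alpha>)) a b
      = (if a \<in> ?Xk \<and> b \<in> ?Xk then ?HZU (a @ replicate \<alpha> False) (b @ replicate \<alpha> False) else 0)"
    unfolding Pi_k_eq_qproj[OF X] by (rule qproj_ancilla_sandwich[OF a b])
  also have "\<dots> = Delta_down_op n w X k a b / complex_of_real (K_down n w X k * sqrt 2)"
  proof (cases "a \<in> ?Xk \<and> b \<in> ?Xk")
    case True
    then obtain \<sigma> \<tau> where \<sigma>: "\<sigma> \<in> ksimplices X k" and \<tau>: "\<tau> \<in> ksimplices X k"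
      and ab: "a = state n (Some (\<sigma>, False))" "b = state n (Some (\<tau>, False))"
      by auto
    show ?thesis
      unfolding if_P[OF True] unfolding ab HZ_block_encoding_entry[OF X U_enc \<sigma> \<tau>]
        Delta_down_op_apply[OF X \<sigma> \<tau>] ..
  next
    case False
    then have "Delta_down_op n w X k a b = 0"
      unfolding Delta_down_op_def by (intro embed_eq_0) auto
    then show ?thesis
      unfolding if_not_P[OF False] by simp
  qed
  finally show "qmult (n + 2 + \<alpha>) (qmult (n + 2 + \<alpha>) (qkron (n + 2) (Pi_k n X k) (bra0 \<alpha>)) ?HZU)
        (qkron (n + 2) (Pi_k n X k) (ket0 \<alpha>)) a b
      = Delta_down_op n w X k a b / complex_of_real (K_down n w X k * sqrt 2)" .
qed

end
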